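(* Let $F$ be a violating edge set and let $(\mathcal{T},\mathcal{M},y)$ be a tree embedding that is good for $F$. Let $E'\subseteq E(\mathcal{T})\setminus\mathcal{M}^{-1}(F)$ and suppose that for every $(A,B)\in Z_F$ there is a path in $E'$ connecting (the leaves corresponding to) $A$ to (the leaves corresponding to) $B$. Then for every $i\in[k]$ there is an $s_i$–$t_i$ path in the graph with edge set $(\mathcal{M}(E')\cup H)\setminus F$, where $\mathcal{M}(E')=\bigcup_{f\in E'}\mathcal{M}_2(f)$.
   Context: Setting: $G=(V,E)$ is an undirected graph whose edges are partitioned into safe and unsafe edges; $p,q$ are nonnegative integers with $p+q\ge1$; $(s_i,t_i)$, $i\in[k]$, are terminal pairs; $H\subseteq E$ is such that every pair is $(p,q)$-flex-connected in $H$ (every cut $\delta_H(S)$ separating $s_i$ from $t_i$ has at least $p$ safe edges or at least $p+q$ edges). A violating edge set is $F=\delta_H(S)$ for some $S$ separating some pair with $|\delta_H(S)|=p+q$ and at most $p-1$ safe edges. Let $\beta\ge1$ and let $\tilde x:E\to\mathbb{R}_{>0}$ be capacities. A tree embedding of $(G,\tilde x)$ is a tree $\mathcal{T}$ with $\mathcal{M}_1:V(\mathcal{T})\to V$ restricting to a bijection between leaves of $\mathcal{T}$ and $V$ (we identify each vertex of $V$ with its leaf), and $\mathcal{M}_2$ mapping each tree edge $(a,b)$ to a path in $G$ between $\mathcal{M}_1(a)$ and $\mathcal{M}_1(b)$; capacities $y(f)=\tilde x(\delta_G(A'))$ where $A'$ is the vertex set corresponding to the leaves of one component of $\mathcal{T}-f$;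 $\mathcal{M}^{-1}(F)=\{f\in E(\mathcal{T}):\mathcal{M}_2(f)\cap F\neq\emptyset\}$. The embedding is good for $F$ if $y(\mathcal{M}^{-1}(F))\le\frac12$. Let $\mathcal{Q}_F$ be the set of vertex sets of connected components of $(V,H\setminus F)$; $Q_{s_i},Q_{t_i}\in\mathcal{Q}_F$ are the components containing $s_i,t_i$. A component $Q\in\mathcal{Q}_F$ is shattered if its leaves do not all lie in one connected component of $\mathcal{T}-\mathcal{M}^{-1}(F)$. Disjoint $A,B\subseteq V$ partition the shattered components if every shattered component is contained in $A$ or in $B$. $Z_F=\{(A\cup Q_{s_i},B\cup Q_{t_i}): (A,B)\text{ partitions the shattered components}, i\in[k]\}$. *)

theory Defs
  imports Complex_Main "HOL-Library.FuncSet"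
begin

text \<open>For the tree we use edges that are themselves two-element vertex sets (inc = id).\<close>

fun walk :: "('e \<Rightarrow> 'v set) \<Rightarrow> 'e set \<Rightarrow> 'v list \<Rightarrow> 'e list \<Rightarrow> bool" where
  "walk inc A [v] [] = True"
| "walk inc A (u # w # vs) (e # es) = (e \<in> A \<and> inc e = {u, w} \<and> walk inc A (w # vs) es)"
| "walk inc A _ _ = False"

definition is_path :: "'v set \<Rightarrow> ('e \<Rightarrow> 'v set) \<Rightarrow> 'e set \<Rightarrow> 'v \<Rightarrow> 'e list \<Rightarrow> 'v \<Rightarrow> bool" where
  "is_path W inc A u es v \<longleftrightarrow>
     (\<exists>vs. walk inc A vs es \<and> distinct vs \<and> set vs \<subseteq> W \<and> hd vs = u \<and> last vs = v)"

definition has_path :: "'v set \<Rightarrow> ('e \<Rightarrow> 'v set) \<Rightarrow> 'e set \<Rightarrow> 'v \<Rightarrow> 'v \<Rightarrow> bool" where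
  "has_path W inc A u v \<longleftrightarrow> (\<exists>es. is_path W inc A u es v)"

definition cut :: "('e \<Rightarrow> 'v set) \<Rightarrow> 'e set \<Rightarrow> 'v set \<Rightarrow> 'e set" where
  "cut inc A S = {e \<in> A. inc e \<inter> S \<noteq> {} \<and> inc e - S \<noteq> {}}"

definition graph :: "'v set \<Rightarrow> ('e \<Rightarrow> 'v set) \<Rightarrow> 'e set \<Rightarrow> bool" where
  "graph V inc E \<longleftrightarrow> finite V \<and> finite E \<and> (\<forall>e\<in>E. \<exists>u v. u \<in> V \<and> v \<in> V \<and> inc e = {u, v})"

definition separates :: "'v set \<Rightarrow> 'v set \<Rightarrow> 'v \<Rightarrow> 'v \<Rightarrow> bool" where
  "separates V S s t \<longleftrightarrow> S \<subseteq> V \<and> ((s \<in> S \<and> t \<notin> S) \<or> (t \<in> S \<and> s \<notin> S))"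

definition flex_connected ::
  "'v set \<Rightarrow> ('e \<Rightarrow> 'v set) \<Rightarrow> 'e set \<Rightarrow> nat \<Rightarrow> nat \<Rightarrow> 'e set \<Rightarrow> 'v \<Rightarrow> 'v \<Rightarrow> bool" where
  "flex_connected V inc Safe p q H s t \<longleftrightarrow>
     (\<forall>S. separates V S s t \<longrightarrow>
        card (cut inc H S \<inter> Safe) \<ge> p \<or> card (cut inc H S) \<ge> p + q)"

definition violating ::
  "'v set \<Rightarrow> ('e \<Rightarrow> 'v set) \<Rightarrow> 'e set \<Rightarrow> nat \<Rightarrow> nat \<Rightarrow> nat \<Rightarrow> (nat \<Rightarrow> 'v) \<Rightarrow> (nat \<Rightarrow> 'v)
     \<Rightarrow> 'e set \<Rightarrow> 'e set \<Rightarrow> bool" where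
  "violating V inc Safe p q k s t H F \<longleftrightarrow>
     (\<exists>S i. i \<in> {1..k} \<and> separates V S (s i) (t i) \<and> F = cut inc H S \<and>
            card F = p + q \<and> card (F \<inter> Safe) < p)"

definition is_tree :: "'t set \<Rightarrow> 't set set \<Rightarrow> bool" where
  "is_tree VT ET \<longleftrightarrow> finite VT \<and> VT \<noteq> {} \<and>
     (\<forall>f\<in>ET. \<exists>a b. a \<in> VT \<and> b \<in> VT \<and> a \<noteq> b \<and> f = {a, b}) \<and>
     (\<forall>a\<in>VT. \<forall>b\<in>VT. has_path VT id ET a b) \<and>
     (\<forall>f\<in>ET. \<not> (\<forall>a\<in>VT. \<forall>b\<in>VT. has_path VT id (ET - {f}) a b))"

definition leaves :: "'t set \<Rightarrow> 't set set \<Rightarrow> 't set" where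
  "leaves VT ET = {a \<in> VT. card {f \<in> ET. a \<in> f} \<le> 1}"

definition leaf_of :: "'t set \<Rightarrow> 't set set \<Rightarrow> ('t \<Rightarrow> 'v) \<Rightarrow> 'v \<Rightarrow> 't" where
  "leaf_of VT ET M1 v = inv_into (leaves VT ET) M1 v"

definition tree_embedding ::
  "'v set \<Rightarrow> ('e \<Rightarrow> 'v set) \<Rightarrow> 'e set \<Rightarrow> 't set \<Rightarrow> 't set set \<Rightarrow> ('t \<Rightarrow> 'v) \<Rightarrow> ('t set \<Rightarrow> 'e list) \<Rightarrow> bool" where
  "tree_embedding V inc E VT ET M1 M2 \<longleftrightarrow>
     is_tree VT ET \<and> M1 \<in> VT \<rightarrow> V \<and> bij_betw M1 (leaves VT ET) V \<and>
     (\<forall>f\<in>ET. \<exists>a b. f = {a, b} \<and> is_path V inc E (M1 a) (M2 f) (M1 b))"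

text \<open>Vertex set of G corresponding to the leaves in the component of T - f containing
a fixed endpoint of f.\<close>
definition side :: "'t set \<Rightarrow> 't set set \<Rightarrow> ('t \<Rightarrow> 'v) \<Rightarrow> 't set \<Rightarrow> 'v set" where
  "side VT ET M1 f =
     M1 ` {c \<in> leaves VT ET. has_path VT id (ET - {f}) (SOME a. a \<in> f) c}"

definition emb_cap ::
  "('e \<Rightarrow> 'v set) \<Rightarrow> 'e set \<Rightarrow> ('e \<Rightarrow> real) \<Rightarrow> 't set \<Rightarrow> 't set set \<Rightarrow> ('t \<Rightarrow> 'v) \<Rightarrow> 't set \<Rightarrow> real" where
  "emb_cap inc E x VT ET M1 f = sum x (cut inc E (side VT ET M1 f))"

definition Minv :: "'t set set \<Rightarrow> ('t set \<Rightarrow> 'e list) \<Rightarrow> 'e set \<Rightarrow> 't set set" where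
  "Minv ET M2 F = {f \<in> ET. set (M2 f) \<inter> F \<noteq> {}}"

definition good_for ::
  "('e \<Rightarrow> 'v set) \<Rightarrow> 'e set \<Rightarrow> ('e \<Rightarrow> real) \<Rightarrow> 't set \<Rightarrow> 't set set \<Rightarrow> ('t \<Rightarrow> 'v) \<Rightarrow> ('t set \<Rightarrow> 'e list)
     \<Rightarrow> 'e set \<Rightarrow> bool" where
  "good_for inc E x VT ET M1 M2 F \<longleftrightarrow>
     (\<Sum>f\<in>Minv ET M2 F. emb_cap inc E x VT ET M1 f) \<le> 1/2"

definition comp_of :: "'v set \<Rightarrow> ('e \<Rightarrow> 'v set) \<Rightarrow> 'e set \<Rightarrow> 'v \<Rightarrow> 'v set" where
  "comp_of V inc A v = {u \<in> V. has_path V inc A v u}"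

definition components :: "'v set \<Rightarrow> ('e \<Rightarrow> 'v set) \<Rightarrow> 'e set \<Rightarrow> 'v set set" where
  "components V inc A = comp_of V inc A ` V"

definition shattered ::
  "'t set \<Rightarrow> 't set set \<Rightarrow> ('t \<Rightarrow> 'v) \<Rightarrow> ('t set \<Rightarrow> 'e list) \<Rightarrow> 'e set \<Rightarrow> 'v set \<Rightarrow> bool" where
  "shattered VT ET M1 M2 F Q \<longleftrightarrow>
     \<not> (\<exists>C. (\<exists>c\<in>VT. C = comp_of VT id (ET - Minv ET M2 F) c) \<and>
            (\<forall>v\<in>Q. leaf_of VT ET M1 v \<in> C))"

definition Z_F ::
  "'v set \<Rightarrow> ('e \<Rightarrow> 'v set) \<Rightarrow> 'e set \<Rightarrow> nat \<Rightarrow> (nat \<Rightarrow> 'v) \<Rightarrow> (nat \<Rightarrow> 'v)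
    \<Rightarrow> 't set \<Rightarrow> 't set set \<Rightarrow> ('t \<Rightarrow> 'v) \<Rightarrow> ('t set \<Rightarrow> 'e list) \<Rightarrow> 'e set
    \<Rightarrow> ('v set \<times> 'v set) set" where
  "Z_F V inc H k s t VT ET M1 M2 F =
     {(A \<union> comp_of V inc (H - F) (s i), B \<union> comp_of V inc (H - F) (t i)) | A B i.
        A \<subseteq> V \<and> B \<subseteq> V \<and> A \<inter> B = {} \<and> i \<in> {1..k} \<and>
        (\<forall>Q\<in>components V inc (H - F). shattered VT ET M1 M2 F Q \<longrightarrow> Q \<subseteq> A \<or> Q \<subseteq> B)}"

end

theory Submission
  imports Defs
begin

text \<open>Suppose s_i and t_i are not connected in W = (M(E') \<union> H) - F, and let C be the set of
  vertices reachable from s_i in W. Since H - F \<subseteq> W, every component of (V, H - F) lies inside C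
  or outside it, so (C, V - C) is one of the pairs in Z_F. The hypothesis yields a tree path in E'
  from a leaf of C to a leaf of V - C; as no edge of E' is mapped onto F, each of its edges is
  realised by a path in W, so the path lifts to a path in W leaving C, which is absurd.
  Only this hypothesis on Z_F and E' \<inter> M^-1(F) = {} are used.\<close>

definition adjacent :: "'v set \<Rightarrow> ('e \<Rightarrow> 'v set) \<Rightarrow> 'e set \<Rightarrow> 'v \<Rightarrow> 'v \<Rightarrow> bool" where
  "adjacent W inc A u v \<longleftrightarrow> u \<in> W \<and> v \<in> W \<and> (\<exists>e\<in>A. inc e = {u, v})"

lemma walk_mono: "walk inc A vs es \<Longrightarrow> set es \<subseteq> B \<Longrightarrow> walk inc B vs es"
  by (induction inc A vs es rule: walk.induct) auto

lemma walk_nonempty: "walk inc A vs es \<Longrightarrow> vs \<noteq> []"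
  by (induction inc A vs es rule: walk.induct) auto

lemma walk_drop: "walk inc A vs es \<Longrightarrow> i < length vs \<Longrightarrow> walk inc A (drop i vs) (drop i es)"
proof (induction inc A vs es arbitrary: i rule: walk.induct)
  case (2 inc A u w vs e es)
  then show ?case by (cases i) auto
qed auto

lemma walk_imp_rtranclp_adjacent:
  "walk inc A vs es \<Longrightarrow> set vs \<subseteq> W \<Longrightarrow> (adjacent W inc A)\<^sup>*\<^sup>* (hd vs) (last vs)"
proof (induction inc A vs es rule: walk.induct)
  case (2 inc A u w vs e es)
  then have "adjacent W inc A u w" by (auto simp: adjacent_def)
  with 2 show ?case by (auto intro: converse_rtranclp_into_rtranclp)
qed auto

lemma rtranclp_adjacent_imp_has_path:
  "(adjacent W inc A)\<^sup>*\<^sup>* u v \<Longrightarrow> u \<in> W \<Longrightarrow> has_path W inc A u v"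
proof (induction rule: converse_rtranclp_induct)
  case base
  then show ?case unfolding has_path_def is_path_def
    by (intro exI[of _ "[]"] exI[of _ "[v]"]) auto
next
  case (step u y)
  then have uW: "u \<in> W" and yW: "y \<in> W" and "\<exists>e\<in>A. inc e = {u, y}"
    by (auto simp: adjacent_def)
  then obtain e where e: "e \<in> A" "inc e = {u, y}" by blast
  from step.IH[OF yW] obtain es vs where w: "walk inc A vs es" "distinct vs" "set vs \<subseteq> W"
    "hd vs = y" "last vs = v" unfolding has_path_def is_path_def by blast
  show ?case
  proof (cases "u \<in> set vs")
    case True
    then obtain i where i: "i < length vs" "vs ! i = u" by (metis in_set_conv_nth)
    have "walk inc A (drop i vs) (drop i es)" using walk_drop[OF w(1) i(1)] .
    moreover have "distinct (drop i vs)" "set (drop i vs) \<subseteq> W"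
      using w(2,3) by (auto dest: in_set_dropD)
    moreover have "hd (drop i vs) = u" "last (drop i vs) = v"
      using i w(5) by (auto simp: hd_drop_conv_nth)
    ultimately show ?thesis unfolding has_path_def is_path_def by blast
  next
    case False
    from walk_nonempty[OF w(1)] w(4) obtain rest where vs: "vs = y # rest"
      by (cases vs) auto
    have "walk inc A (u # vs) (e # es)" "distinct (u # vs)" "set (u # vs) \<subseteq> W"
      "hd (u # vs) = u" "last (u # vs) = v"
      using e w vs False uW by auto
    then show ?thesis unfolding has_path_def is_path_def by blast
  qed
qed

lemma has_path_iff_rtranclp:
  "has_path W inc A u v \<longleftrightarrow> u \<in> W \<and> (adjacent W inc A)\<^sup>*\<^sup>* u v"
proof
  assume "has_path W inc A u v"
  then obtain es vs where w: "walk inc A vs es" "set vs \<subseteq> W" "hd vs = u" "last vs = v"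
    unfolding has_path_def is_path_def by blast
  have "u \<in> W" using walk_nonempty[OF w(1)] w(2,3) hd_in_set by blast
  with walk_imp_rtranclp_adjacent[OF w(1,2)] w(3,4)
  show "u \<in> W \<and> (adjacent W inc A)\<^sup>*\<^sup>* u v" by simp
qed (auto intro: rtranclp_adjacent_imp_has_path)

lemma has_path_refl: "u \<in> W \<Longrightarrow> has_path W inc A u u"
  by (simp add: has_path_iff_rtranclp)

lemma has_path_endpoints: "has_path W inc A u v \<Longrightarrow> u \<in> W \<and> v \<in> W"
  by (auto simp: has_path_iff_rtranclp adjacent_def elim: rtranclp.cases)

lemma has_path_trans:
  "has_path W inc A u v \<Longrightarrow> has_path W inc A v w \<Longrightarrow> has_path W inc A u w"
  by (auto simp: has_path_iff_rtranclp)

lemma has_path_sym: "has_path W inc A u v \<Longrightarrow> has_path W inc A v u"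
proof -
  have "symp (adjacent W inc A)"
    by (auto simp: symp_def adjacent_def insert_commute)
  then show "has_path W inc A u v \<Longrightarrow> has_path W inc A v u"
    using has_path_endpoints[of W inc A u v]
    by (auto simp: has_path_iff_rtranclp intro: symp_rtranclp[THEN sympD])
qed

lemma is_path_mono: "is_path W inc A u es v \<Longrightarrow> set es \<subseteq> B \<Longrightarrow> is_path W inc B u es v"
  unfolding is_path_def using walk_mono by blast

lemma has_path_mono: "has_path W inc A u v \<Longrightarrow> A \<subseteq> B \<Longrightarrow> has_path W inc B u v"
proof -
  assume "A \<subseteq> B"
  then have "adjacent W inc A \<le> adjacent W inc B" by (fastforce simp: adjacent_def)
  then show "has_path W inc A u v \<Longrightarrow> has_path W inc B u v"
    by (auto simp: has_path_iff_rtranclp intro: rtranclp_mono[THEN predicate2D])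
qed

lemma component_inside_or_outside_comp_of:
  assumes "A \<subseteq> B" and "Q \<in> components V inc A"
  shows "Q \<subseteq> comp_of V inc B u \<or> Q \<subseteq> V - comp_of V inc B u"
proof -
  obtain v where Q: "Q = comp_of V inc A v" using assms(2) unfolding components_def by blast
  have QV: "Q \<subseteq> V" by (auto simp: Q comp_of_def)
  have vB: "has_path V inc B v w" if "w \<in> Q" for w
    using that has_path_mono[OF _ assms(1)] by (auto simp: Q comp_of_def)
  show ?thesis
  proof (cases "\<exists>w\<in>Q. has_path V inc B u w")
    case True
    then obtain w where "w \<in> Q" "has_path V inc B u w" by blast
    then have "has_path V inc B u v" by (metis vB has_path_sym has_path_trans)
    then have "Q \<subseteq> comp_of V inc B u"
      using QV vB has_path_trans[of V inc B u v] by (auto simp: comp_of_def)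
    then show ?thesis ..
  next
    case False
    then show ?thesis using QV by (auto simp: comp_of_def)
  qed
qed

lemma separating_union_of_components_in_Z_F:
  assumes "i \<in> {1..k}" and "C \<subseteq> V" and "s i \<in> C" and "t i \<in> V - C"
    and "\<forall>Q\<in>components V inc (H - F). Q \<subseteq> C \<or> Q \<subseteq> V - C"
  shows "(C, V - C) \<in> Z_F V inc H k s t VT ET M1 M2 F"
proof -
  have own_component: "comp_of V inc (H - F) v \<in> components V inc (H - F)"
    "v \<in> comp_of V inc (H - F) v" if "v \<in> V" for v
    using that has_path_refl unfolding components_def comp_of_def by auto
  have "comp_of V inc (H - F) (s i) \<subseteq> C" "comp_of V inc (H - F) (t i) \<subseteq> V - C"
    using assms(2-5) own_component[of "s i"] own_component[of "t i"] by blast+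
  then have "C \<union> comp_of V inc (H - F) (s i) = C"
    "(V - C) \<union> comp_of V inc (H - F) (t i) = V - C" by blast+
  with assms(1,2,5) show ?thesis unfolding Z_F_def mem_Collect_eq
    by (intro exI[of _ C] exI[of _ "V - C"] exI[of _ i]) auto
qed

lemma leaf_of_inverse:
  assumes "tree_embedding V inc E VT ET M1 M2" and "v \<in> V"
  shows "M1 (leaf_of VT ET M1 v) = v"
  using assms unfolding tree_embedding_def leaf_of_def by (metis bij_betw_def f_inv_into_f)

lemma tree_embedding_lifts_edge:
  assumes emb: "tree_embedding V inc E VT ET M1 M2"
    and "{c, d} \<in> ET" and "set (M2 {c, d}) \<subseteq> W"
  shows "has_path V inc W (M1 c) (M1 d)"
proof -
  have "\<forall>f\<in>ET. \<exists>a b. f = {a, b} \<and> is_path V inc E (M1 a) (M2 f) (M1 b)"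
    using emb unfolding tree_embedding_def by blast
  then obtain a b where ab: "{c, d} = {a, b}" and "is_path V inc E (M1 a) (M2 {c, d}) (M1 b)"
    using assms(2) by (meson bspec)
  then have "has_path V inc W (M1 a) (M1 b)"
    using assms(3) is_path_mono unfolding has_path_def by metis
  moreover have "(c = a \<and> d = b) \<or> (c = b \<and> d = a)"
    using ab by (simp add: doubleton_eq_iff)
  ultimately show ?thesis by (metis has_path_sym)
qed

lemma tree_embedding_lifts_path:
  assumes emb: "tree_embedding V inc E VT ET M1 M2"
    and "E' \<subseteq> ET" and "\<forall>f\<in>E'. set (M2 f) \<subseteq> W"
    and "has_path VT id E' a b"
  shows "has_path V inc W (M1 a) (M1 b)"
proof -
  have "a \<in> VT" and tree_path: "(adjacent VT id E')\<^sup>*\<^sup>* a b"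
    using assms(4) unfolding has_path_iff_rtranclp by blast+
  have "M1 a \<in> V" using emb \<open>a \<in> VT\<close> unfolding tree_embedding_def by blast
  from tree_path show ?thesis
  proof (induction rule: rtranclp_induct)
    case base
    show ?case using \<open>M1 a \<in> V\<close> by (rule has_path_refl)
  next
    case (step c d)
    then have "{c, d} \<in> E'" by (auto simp: adjacent_def)
    with assms(2,3) have "has_path V inc W (M1 c) (M1 d)"
      using tree_embedding_lifts_edge[OF emb] by blast
    with step.IH show ?case by (rule has_path_trans)
  qed
qed

theorem claim4p3:
  fixes V :: "'v set" and E :: "'e set" and inc :: "'e \<Rightarrow> 'v set" and Safe :: "'e set"
    and p q k :: nat and s t :: "nat \<Rightarrow> 'v" and H F :: "'e set" and x :: "'e \<Rightarrow> real"
    and VT :: "'t set" and ET :: "'t set set" and M1 :: "'t \<Rightarrow> 'v" and M2 :: "'t set \<Rightarrow> 'e list"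
    and E' :: "'t set set"
  assumes G: "graph V inc E"
    and Safe: "Safe \<subseteq> E"
    and pq: "p + q \<ge> 1"
    and terminals: "\<forall>i\<in>{1..k}. s i \<in> V \<and> t i \<in> V"
    and HE: "H \<subseteq> E"
    and flex: "\<forall>i\<in>{1..k}. flex_connected V inc Safe p q H (s i) (t i)"
    and cap: "\<forall>e\<in>E. x e > 0"
    and viol: "violating V inc Safe p q k s t H F"
    and emb: "tree_embedding V inc E VT ET M1 M2"
    and good: "good_for inc E x VT ET M1 M2 F"
    and E'sub: "E' \<subseteq> ET - Minv ET M2 F"
    and conn: "\<forall>(A, B) \<in> Z_F V inc H k s t VT ET M1 M2 F.
                 \<exists>a\<in>A. \<exists>b\<in>B. has_path VT id E' (leaf_of VT ET M1 a) (leaf_of VT ET M1 b)"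
  shows "\<forall>i\<in>{1..k}. has_path V inc (((\<Union>f\<in>E'. set (M2 f)) \<union> H) - F) (s i) (t i)"
proof
  fix i assume i: "i \<in> {1..k}"
  define W where "W = ((\<Union>f\<in>E'. set (M2 f)) \<union> H) - F"
  define C where "C = comp_of V inc W (s i)"
  show "has_path V inc W (s i) (t i)"
  proof (rule ccontr)
    assume "\<not> has_path V inc W (s i) (t i)"
    then have "t i \<in> V - C" using terminals i by (simp add: C_def comp_of_def)
    moreover have "s i \<in> C" using terminals i by (simp add: C_def comp_of_def has_path_refl)
    moreover have "H - F \<subseteq> W" unfolding W_def by blast
    moreover have "C \<subseteq> V" unfolding C_def comp_of_def by blast
    moreover have "\<forall>Q\<in>components V inc (H - F). Q \<subseteq> C \<or> Q \<subseteq> V - C"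
      unfolding C_def using component_inside_or_outside_comp_of[OF \<open>H - F \<subseteq> W\<close>] by (rule ballI)
    ultimately have "(C, V - C) \<in> Z_F V inc H k s t VT ET M1 M2 F"
      using i by (intro separating_union_of_components_in_Z_F)
    from bspec[OF conn this] obtain a b where "a \<in> C" "b \<in> V - C"
      and tree_path: "has_path VT id E' (leaf_of VT ET M1 a) (leaf_of VT ET M1 b)" by auto
    have "E' \<subseteq> ET" "\<forall>f\<in>E'. set (M2 f) \<subseteq> W"
      using E'sub unfolding W_def Minv_def by blast+
    from tree_embedding_lifts_path[OF emb this tree_path]
    have "has_path V inc W a b"
      using \<open>a \<in> C\<close> \<open>b \<in> V - C\<close> \<open>C \<subseteq> V\<close> leaf_of_inverse[OF emb] by auto
    moreover have "has_path V inc W (s i) a" using \<open>a \<in> C\<close> by (simp add: C_def comp_of_def)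
    ultimately have "has_path V inc W (s i) b" by (metis has_path_trans)
    with \<open>b \<in> V - C\<close> show False by (simp add: C_def comp_of_def)
  qed
qed

end
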